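(* For every $n\ge 3$, $$\sum_{T\in\mathcal{BT}_n}S(T)=n\sum_{k=1}^{n-1}\frac{(2n-k-3)!\,k^2}{(n-k-1)!\,2^{n-k-1}}.$$
   Context: $\mathcal{BT}_n$ is the set of (isomorphism classes of) binary phylogenetic trees with leaves bijectively labeled by $\{1,\dots,n\}$ (rooted trees, every internal node with exactly two children). The depth $\delta_T(v)$ is the number of arcs from the root to $v$, and the Sackin index is $S(T)=\sum_{i=1}^n\delta_T(i)$. *)

theory Defs
  imports Complex_Main
begin

text \<open>Rooted binary trees with natural-number leaf labels (children ordered;
  unordered trees are obtained below by quotienting with isomorphism).\<close>
datatype ltree = Leaf nat | Node ltree ltree

fun leaves :: "ltree \<Rightarrow> nat list" where
  "leaves (Leaf i) = [i]"
| "leaves (Node l r) = leaves l @ leaves r"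

inductive iso :: "ltree \<Rightarrow> ltree \<Rightarrow> bool" where
  iso_leaf: "iso (Leaf i) (Leaf i)"
| iso_node: "iso l l' \<Longrightarrow> iso r r' \<Longrightarrow> iso (Node l r) (Node l' r')"
| iso_swap: "iso l l' \<Longrightarrow> iso r r' \<Longrightarrow> iso (Node l r) (Node r' l')"

fun depth :: "ltree \<Rightarrow> nat \<Rightarrow> nat" where
  "depth (Leaf j) i = 0"
| "depth (Node l r) i = 1 + (if i \<in> set (leaves l) then depth l i else depth r i)"

definition labelled_trees :: "nat \<Rightarrow> ltree set" where
  "labelled_trees n = {t. distinct (leaves t) \<and> set (leaves t) = {1..n}}"

definition BT :: "nat \<Rightarrow> ltree set set" where
  "BT n = labelled_trees n // {(s, t). iso s t}"

definition sackin :: "nat \<Rightarrow> ltree \<Rightarrow> nat" where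
  "sackin n t = (\<Sum>i = 1..n. depth t i)"

definition sackin_class :: "nat \<Rightarrow> ltree set \<Rightarrow> nat" where
  "sackin_class n C = sackin n (SOME t. t \<in> C)"

end

theory Submission
  imports Defs
begin

(*
  The Sackin index of a tree is its external path length (the sum of all leaf depths).

  An unordered tree with n distinctly labelled leaves has exactly 2^(n-1) ordered
  representatives (one choice of child order at each of the n-1 internal nodes), all of the
  same path length.  Hence 2^(n-1) times the total Sackin index over BT n equals the total
  path length over all ordered trees whose leaves are labelled bijectively by 1..n.

  Every ordered tree on n+1 leaves arises in exactly one way by inserting the leaf n+1 as a
  new sibling of one of the 2n-1 nodes of an ordered tree on n leaves, on the left or on the
  right.  This yields recurrences for the number of ordered trees and for their total path
  length, which solve to (2k)!/k! and (k+1)(4^k k! - (2k)!/k!) for k+1 leaves.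

  Independently, a telescoping argument evaluates the right-hand sum of the theorem in
  closed form; comparing the two closed forms proves the theorem (in fact for all n >= 2).
*)

lemma leaves_not_Nil: "leaves t \<noteq> []"
  by (induction t) auto

lemma length_leaves_pos: "length (leaves t) \<ge> 1"
  using leaves_not_Nil[of t] by (cases "leaves t") auto

text \<open>External path length, defined recursively: every leaf below a node is one arc deeper
  than in the corresponding subtree.\<close>

fun path_length :: "ltree \<Rightarrow> nat" where
  "path_length (Leaf j) = 0"
| "path_length (Node l r) = path_length l + path_length r + length (leaves l) + length (leaves r)"

lemma sum_depth_eq_path_length:
  "distinct (leaves t) \<Longrightarrow> (\<Sum>i\<in>set (leaves t). depth t i) = path_length t"
proof (induction t)
  case (Leaf j)
  then show ?case by simp
next
  case (Node l r)
  have disj: "set (leaves l) \<inter> set (leaves r) = {}"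
    and dl: "distinct (leaves l)" and dr: "distinct (leaves r)"
    using Node.prems by auto
  have "(\<Sum>i\<in>set (leaves (Node l r)). depth (Node l r) i)
     = (\<Sum>i\<in>set (leaves l). depth (Node l r) i) + (\<Sum>i\<in>set (leaves r). depth (Node l r) i)"
    using disj by (simp add: sum.union_disjoint)
  also have "\<dots> = (\<Sum>i\<in>set (leaves l). 1 + depth l i) + (\<Sum>i\<in>set (leaves r). 1 + depth r i)"
    using disj by (intro arg_cong2[where f="(+)"] sum.cong) auto
  also have "\<dots> = path_length (Node l r)"
    using Node.IH dl dr by (simp only: sum.distrib) (simp add: distinct_card)
  finally show ?case .
qed

lemma labelled_trees_length: "t \<in> labelled_trees n \<Longrightarrow> length (leaves t) = n"
  unfolding labelled_trees_def by (auto dest!: distinct_card)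

lemma sackin_eq_path_length: "t \<in> labelled_trees n \<Longrightarrow> sackin n t = path_length t"
  unfolding labelled_trees_def sackin_def using sum_depth_eq_path_length by force

section \<open>Isomorphism classes\<close>

lemma iso_refl: "iso t t"
  by (induction t) (auto intro: iso.intros)

lemma iso_sym: "iso s t \<Longrightarrow> iso t s"
  by (induction rule: iso.induct) (auto intro: iso.intros)

lemma iso_trans: "iso s t \<Longrightarrow> iso t u \<Longrightarrow> iso s u"
proof (induction s t arbitrary: u rule: iso.induct)
  case (iso_leaf i)
  then show ?case by simp
next
  case (iso_node l l' r r')
  from iso_node.prems show ?case
    by (cases rule: iso.cases) (auto intro: iso.intros iso_node.IH)
next
  case (iso_swap l l' r r')
  from iso_swap.prems show ?case
    by (cases rule: iso.cases) (auto intro: iso.intros iso_swap.IH)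
qed

lemma iso_set_leaves: "iso s t \<Longrightarrow> set (leaves s) = set (leaves t)"
  by (induction rule: iso.induct) auto

lemma iso_length_leaves: "iso s t \<Longrightarrow> length (leaves s) = length (leaves t)"
  by (induction rule: iso.induct) auto

lemma iso_distinct_leaves: "iso s t \<Longrightarrow> distinct (leaves s) \<Longrightarrow> distinct (leaves t)"
  by (metis card_distinct distinct_card iso_length_leaves iso_set_leaves)

lemma iso_path_length: "iso s t \<Longrightarrow> path_length s = path_length t"
  by (induction rule: iso.induct) (auto simp: iso_length_leaves)

lemma iso_Leaf_iff: "iso (Leaf i) u \<longleftrightarrow> u = Leaf i"
  by (auto elim: iso.cases intro: iso.intros)

lemma iso_Node_iff: "iso (Node l r) u \<longleftrightarrow>
   (\<exists>a b. u = Node a b \<and> iso l a \<and> iso r b) \<or> (\<exists>a b. u = Node b a \<and> iso l a \<and> iso r b)"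
  by (auto elim: iso.cases intro: iso.intros)

text \<open>With distinct leaf labels the two subtrees of a node can never be isomorphic, so the
  two child orders give disjoint sets of trees and each internal node doubles the class.\<close>

lemma card_iso_class:
  "distinct (leaves t) \<Longrightarrow> finite {u. iso t u} \<and> card {u. iso t u} = 2 ^ (length (leaves t) - 1)"
proof (induction t)
  case (Leaf j)
  then show ?case by (simp add: iso_Leaf_iff)
next
  case (Node l r)
  define A where "A = {u. iso l u}"
  define B where "B = {u. iso r u}"
  have disj: "set (leaves l) \<inter> set (leaves r) = {}"
    using Node.prems by auto
  have A: "finite A" "card A = 2 ^ (length (leaves l) - 1)"
    and B: "finite B" "card B = 2 ^ (length (leaves r) - 1)"
    using Node A_def B_def by auto
  have class_eq: "{u. iso (Node l r) u} = (\<lambda>(a, b). Node a b) ` (A \<times> B) \<union> (\<lambda>(a, b). Node b a) ` (A \<times> B)"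
    unfolding A_def B_def iso_Node_iff by auto
  have orders_disjoint: "(\<lambda>(a, b). Node a b) ` (A \<times> B) \<inter> (\<lambda>(a, b). Node b a) ` (A \<times> B) = {}"
  proof (rule ccontr)
    assume "\<not> ?thesis"
    then obtain a where "iso l a" "iso r a"
      by (auto simp: A_def B_def)
    then have "set (leaves l) = set (leaves r)"
      using iso_set_leaves by metis
    then show False
      using disj leaves_not_Nil by (metis Int_absorb set_empty)
  qed
  have "inj_on (\<lambda>(a, b). Node a b) (A \<times> B)" "inj_on (\<lambda>(a, b). Node b a) (A \<times> B)"
    by (auto simp: inj_on_def)
  then have "card {u. iso (Node l r) u} = 2 * (card A * card B)"
    unfolding class_eq using orders_disjoint A B
    by (simp add: card_Un_disjoint card_image card_cartesian_product)
  also have "\<dots> = 2 ^ (length (leaves (Node l r)) - 1)"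
  proof -
    obtain a b where "length (leaves l) = Suc a" "length (leaves r) = Suc b"
      using length_leaves_pos[of l] length_leaves_pos[of r] by (metis Suc_le_D One_nat_def)
    then show ?thesis
      using A B by (simp add: power_add)
  qed
  finally show ?case
    using class_eq A B by auto
qed

lemma BT_eq_iso_classes: "BT n = (\<lambda>x. {u. iso x u}) ` labelled_trees n"
  unfolding BT_def quotient_def by auto

lemma iso_class_subset:
  "x \<in> labelled_trees n \<Longrightarrow> {u. iso x u} \<subseteq> labelled_trees n"
  using iso_set_leaves iso_distinct_leaves unfolding labelled_trees_def by fastforce

lemma sackin_class_iso_class:
  assumes "x \<in> labelled_trees n"
  shows "sackin_class n {u. iso x u} = path_length x"
proof -
  have "iso x (SOME t. iso x t)"
    by (rule someI[of _ x]) (rule iso_refl)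
  then show ?thesis
    unfolding sackin_class_def
    using iso_class_subset[OF assms] sackin_eq_path_length iso_path_length by auto
qed

lemma path_length_sum_classes:
  "2 ^ (n - 1) * (\<Sum>C\<in>BT n. sackin_class n C) = (\<Sum>t\<in>labelled_trees n. path_length t)"
proof -
  let ?L = "labelled_trees n"
  have class_card: "finite {u. iso x u} \<and> card {u. iso x u} = 2 ^ (n - 1)" if "x \<in> ?L" for x
    using card_iso_class[of x] that labelled_trees_length[OF that]
    unfolding labelled_trees_def by auto
  have classes_disjoint: "{u. iso x u} = {u. iso y u} \<or> {u. iso x u} \<inter> {u. iso y u} = {}" for x y
    by (metis (mono_tags) Collect_cong disjoint_iff iso_sym iso_trans mem_Collect_eq)
  have L_eq: "?L = \<Union> (BT n)"
    unfolding BT_eq_iso_classes using iso_class_subset iso_refl by blast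
  have "(\<Sum>t\<in>?L. path_length t) = (\<Sum>C\<in>BT n. \<Sum>t\<in>C. path_length t)"
    unfolding L_eq
  proof (rule sum.Union_disjoint[simplified])
    show "\<forall>A\<in>BT n. finite A"
      using class_card by (auto simp: BT_eq_iso_classes)
    show "\<forall>A\<in>BT n. \<forall>B\<in>BT n. A \<noteq> B \<longrightarrow> A \<inter> B = {}"
      unfolding BT_eq_iso_classes using classes_disjoint by blast
  qed
  also have "\<dots> = (\<Sum>C\<in>BT n. 2 ^ (n - 1) * sackin_class n C)"
  proof (rule sum.cong)
    fix C assume "C \<in> BT n"
    then obtain x where x: "x \<in> ?L" "C = {u. iso x u}"
      unfolding BT_eq_iso_classes by auto
    then have "(\<Sum>t\<in>C. path_length t) = (\<Sum>t\<in>C. path_length x)"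
      using iso_path_length by (intro sum.cong) auto
    then show "(\<Sum>t\<in>C. path_length t) = 2 ^ (n - 1) * sackin_class n C"
      using class_card[OF x(1)] sackin_class_iso_class[OF x(1)] x(2) by simp
  qed simp
  finally show ?thesis
    by (simp add: sum_distrib_left)
qed

section \<open>Building ordered trees by inserting a new leaf\<close>

fun insert_leaf :: "nat \<Rightarrow> ltree \<Rightarrow> ltree list" where
  "insert_leaf x (Leaf j) = [Node (Leaf x) (Leaf j), Node (Leaf j) (Leaf x)]"
| "insert_leaf x (Node l r) = Node (Leaf x) (Node l r) # Node (Node l r) (Leaf x) #
     map (\<lambda>l'. Node l' r) (insert_leaf x l) @ map (\<lambda>r'. Node l r') (insert_leaf x r)"

fun remove_leaf :: "nat \<Rightarrow> ltree \<Rightarrow> ltree" where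
  "remove_leaf x (Leaf j) = Leaf j"
| "remove_leaf x (Node l r) = (if l = Leaf x then r else if r = Leaf x then l
     else if x \<in> set (leaves l) then Node (remove_leaf x l) r else Node l (remove_leaf x r))"

lemma insert_leaf_set_leaves:
  "u \<in> set (insert_leaf x t) \<Longrightarrow> set (leaves u) = insert x (set (leaves t))"
  by (induction x t arbitrary: u rule: insert_leaf.induct) auto

lemma insert_leaf_length_leaves:
  "u \<in> set (insert_leaf x t) \<Longrightarrow> length (leaves u) = Suc (length (leaves t))"
  by (induction x t arbitrary: u rule: insert_leaf.induct) auto

lemma insert_leaf_not_Leaf: "u \<in> set (insert_leaf x t) \<Longrightarrow> u \<noteq> Leaf y"
  using insert_leaf_length_leaves[of u x t] length_leaves_pos[of t] by auto

lemma insert_leaf_distinct_leaves: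
  "u \<in> set (insert_leaf x t) \<Longrightarrow> x \<notin> set (leaves t) \<Longrightarrow> distinct (leaves t) \<Longrightarrow> distinct (leaves u)"
proof (induction x t arbitrary: u rule: insert_leaf.induct)
  case (2 x l r)
  then show ?case
    using insert_leaf_set_leaves[of _ x l] insert_leaf_set_leaves[of _ x r] by auto
qed auto

lemma remove_insert_leaf:
  "u \<in> set (insert_leaf x t) \<Longrightarrow> x \<notin> set (leaves t) \<Longrightarrow> remove_leaf x u = t"
proof (induction x t arbitrary: u rule: insert_leaf.induct)
  case (2 x l r)
  then show ?case
    using insert_leaf_set_leaves[of _ x l] insert_leaf_set_leaves[of _ x r]
      insert_leaf_not_Leaf[of _ x l] insert_leaf_not_Leaf[of _ x r]
    by auto
qed auto

lemma insert_remove_leaf: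
  "distinct (leaves u) \<Longrightarrow> x \<in> set (leaves u) \<Longrightarrow> u \<noteq> Leaf x \<Longrightarrow>
   u \<in> set (insert_leaf x (remove_leaf x u))"
proof (induction u)
  case (Leaf y)
  then show ?case by auto
next
  case (Node l r)
  consider "l = Leaf x" | "r = Leaf x" | "l \<noteq> Leaf x" "r \<noteq> Leaf x" "x \<in> set (leaves l)"
    | "l \<noteq> Leaf x" "r \<noteq> Leaf x" "x \<in> set (leaves r)" "x \<notin> set (leaves l)"
    using Node.prems(2) by auto
  then show ?case
  proof cases
    case 1
    then show ?thesis by (cases r) auto
  next
    case 2
    then show ?thesis using Node.prems by (cases l) auto
  next
    case 3
    then have "l \<in> set (insert_leaf x (remove_leaf x l))"
      using Node by auto
    then show ?thesis using 3 by (cases "remove_leaf x l") auto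
  next
    case 4
    then have "r \<in> set (insert_leaf x (remove_leaf x r))"
      using Node by auto
    then show ?thesis using 4 by (cases "remove_leaf x r") auto
  qed
qed

text \<open>A tree with k leaves has 2k-1 nodes, so a leaf can be inserted in 4k-2 ways,
  and all of them are different.\<close>

lemma length_insert_leaf: "length (insert_leaf x t) = 4 * length (leaves t) - 2"
proof (induction x t rule: insert_leaf.induct)
  case (2 x l r)
  then show ?case using length_leaves_pos[of l] length_leaves_pos[of r] by simp
qed simp

lemma distinct_insert_leaf: "x \<notin> set (leaves t) \<Longrightarrow> distinct (insert_leaf x t)"
proof (induction x t rule: insert_leaf.induct)
  case (1 x j)
  then show ?case by auto
next
  case (2 x l r)
  have "(\<lambda>l'. Node l' r) ` set (insert_leaf x l) \<inter> (\<lambda>r'. Node l r') ` set (insert_leaf x r) = {}"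
    using 2(3) insert_leaf_set_leaves[of _ x l] by auto
  then show ?case
    using 2 insert_leaf_not_Leaf[of _ x l] insert_leaf_not_Leaf[of _ x r]
    by (auto simp: distinct_map inj_on_def)
qed

lemma sum_list_map_plus_const: "(\<Sum>x\<leftarrow>xs. f x + c) = (\<Sum>x\<leftarrow>xs. f x) + length xs * (c::nat)"
  by (simp add: sum_list_addf sum_list_triv)

text \<open>Inserting the new leaf above a node of depth d with m leaves below it adds d + m + 1 to
  the path length (the new leaf gets depth d + 1 and the m leaves move one level down).
  Summed over all 4k-2 insertions into a tree with k leaves and path length P this gives
  (4k-2) P + 6 P + 2k + 2.\<close>

lemma sum_path_length_insert_leaf:
  "(\<Sum>u\<leftarrow>insert_leaf x t. path_length u)
     = 4 * (length (leaves t) + 1) * path_length t + 2 * (length (leaves t) + 1)"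
proof (induction x t rule: insert_leaf.induct)
  case (1 x j)
  then show ?case by simp
next
  case (2 x l r)
  define a where "a = length (leaves l)"
  define b where "b = length (leaves r)"
  have left: "(\<Sum>u\<leftarrow>map (\<lambda>l'. Node l' r) (insert_leaf x l). path_length u)
     = (\<Sum>u\<leftarrow>insert_leaf x l. path_length u)
       + length (insert_leaf x l) * (path_length r + a + 1 + b)"
    unfolding sum_list_map_plus_const[symmetric]
    by (intro arg_cong[where f=sum_list]) (auto simp: insert_leaf_length_leaves a_def b_def)
  have right: "(\<Sum>u\<leftarrow>map (\<lambda>r'. Node l r') (insert_leaf x r). path_length u)
     = (\<Sum>u\<leftarrow>insert_leaf x r. path_length u)
       + length (insert_leaf x r) * (path_length l + a + 1 + b)"
    unfolding sum_list_map_plus_const[symmetric]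
    by (intro arg_cong[where f=sum_list]) (auto simp: insert_leaf_length_leaves a_def b_def)
  obtain a' b' where "a = Suc a'" "b = Suc b'"
    using length_leaves_pos[of l] length_leaves_pos[of r] a_def b_def
    by (metis Suc_le_D One_nat_def)
  then show ?case
    using left right 2 length_insert_leaf[of x l] length_insert_leaf[of x r]
    by (simp add: a_def[symmetric] b_def[symmetric] algebra_simps)
qed

section \<open>Counting ordered trees and their path lengths\<close>

lemma labelled_trees_1: "labelled_trees (Suc 0) = {Leaf 1}"
proof
  show "labelled_trees (Suc 0) \<subseteq> {Leaf 1}"
  proof
    fix t assume t: "t \<in> labelled_trees (Suc 0)"
    then obtain j where j: "leaves t = [j]"
      using labelled_trees_length[OF t] by (cases "leaves t") auto
    then have "t = Leaf j"
      by (cases t) (auto simp: append_eq_Cons_conv leaves_not_Nil)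
    then show "t \<in> {Leaf 1}"
      using t j by (auto simp: labelled_trees_def)
  qed
qed (auto simp: labelled_trees_def)

lemma labelled_trees_Suc:
  assumes "n \<ge> 1"
  shows "labelled_trees (Suc n) = (\<Union>t\<in>labelled_trees n. set (insert_leaf (Suc n) t))"
proof
  show "(\<Union>t\<in>labelled_trees n. set (insert_leaf (Suc n) t)) \<subseteq> labelled_trees (Suc n)"
    using insert_leaf_set_leaves insert_leaf_distinct_leaves
    by (fastforce simp: labelled_trees_def)
next
  show "labelled_trees (Suc n) \<subseteq> (\<Union>t\<in>labelled_trees n. set (insert_leaf (Suc n) t))"
  proof
    fix u assume u: "u \<in> labelled_trees (Suc n)"
    define t where "t = remove_leaf (Suc n) u"
    have u_leaves: "length (leaves u) = Suc n" "distinct (leaves u)" "set (leaves u) = {1..Suc n}"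
      using u labelled_trees_length[OF u] by (auto simp: labelled_trees_def)
    then have ut: "u \<in> set (insert_leaf (Suc n) t)"
      unfolding t_def using assms by (intro insert_remove_leaf) auto
    have t_set: "insert (Suc n) (set (leaves t)) = {1..Suc n}"
      and t_length: "length (leaves t) = n"
      using insert_leaf_set_leaves[OF ut] insert_leaf_length_leaves[OF ut] u_leaves by auto
    have "Suc n \<notin> set (leaves t)"
    proof
      assume "Suc n \<in> set (leaves t)"
      then have "card (set (leaves t)) = Suc n"
        using t_set by (simp add: insert_absorb)
      then show False
        using card_length[of "leaves t"] t_length by simp
    qed
    then have "set (leaves t) = {1..Suc n} - {Suc n}"
      using t_set by (metis Diff_insert_absorb)
    then have "set (leaves t) = {1..n}"
      by (simp add: atLeastAtMostSuc_conv)
    then have "t \<in> labelled_trees n"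
      using t_length by (simp add: labelled_trees_def card_distinct)
    then show "u \<in> (\<Union>t\<in>labelled_trees n. set (insert_leaf (Suc n) t))"
      using ut by auto
  qed
qed

lemma insert_leaf_disjoint:
  assumes "t1 \<in> labelled_trees n" "t2 \<in> labelled_trees n" "t1 \<noteq> t2"
  shows "set (insert_leaf (Suc n) t1) \<inter> set (insert_leaf (Suc n) t2) = {}"
  using assms remove_insert_leaf[of _ "Suc n" t1] remove_insert_leaf[of _ "Suc n" t2]
  by (auto simp: labelled_trees_def)

lemma finite_labelled_trees: "n \<ge> 1 \<Longrightarrow> finite (labelled_trees n)"
proof (induction n rule: dec_induct)
  case base
  then show ?case by (simp add: labelled_trees_1)
next
  case (step n)
  then show ?case by (simp add: labelled_trees_Suc)
qed

lemma sum_labelled_trees_Suc: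
  fixes f :: "ltree \<Rightarrow> 'a :: comm_monoid_add"
  assumes "n \<ge> 1"
  shows "(\<Sum>u\<in>labelled_trees (Suc n). f u) = (\<Sum>t\<in>labelled_trees n. \<Sum>u\<leftarrow>insert_leaf (Suc n) t. f u)"
proof -
  have "(\<Sum>u\<in>labelled_trees (Suc n). f u) = (\<Sum>t\<in>labelled_trees n. \<Sum>u\<in>set (insert_leaf (Suc n) t). f u)"
    unfolding labelled_trees_Suc[OF assms]
    using finite_labelled_trees[OF assms] insert_leaf_disjoint by (intro sum.UNION_disjoint) auto
  also have "\<dots> = (\<Sum>t\<in>labelled_trees n. \<Sum>u\<leftarrow>insert_leaf (Suc n) t. f u)"
    by (intro sum.cong refl sum_list_distinct_conv_sum_set[symmetric] distinct_insert_leaf)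
      (auto simp: labelled_trees_def)
  finally show ?thesis .
qed

lemma card_labelled_trees_Suc:
  "n \<ge> 1 \<Longrightarrow> card (labelled_trees (Suc n)) = (4 * n - 2) * card (labelled_trees n)"
  using sum_labelled_trees_Suc[of n "\<lambda>_. 1::nat"]
  by (simp add: sum_list_triv length_insert_leaf labelled_trees_length)

lemma path_length_labelled_trees_Suc:
  assumes "n \<ge> 1"
  shows "(\<Sum>u\<in>labelled_trees (Suc n). path_length u)
     = 4 * (n + 1) * (\<Sum>t\<in>labelled_trees n. path_length t) + 2 * (n + 1) * card (labelled_trees n)"
proof -
  have "(\<Sum>u\<in>labelled_trees (Suc n). path_length u)
      = (\<Sum>t\<in>labelled_trees n. 4 * (n + 1) * path_length t + 2 * (n + 1))"
    using sum_labelled_trees_Suc[OF assms, of path_length]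
    by (simp only: sum_path_length_insert_leaf) (simp add: labelled_trees_length)
  also have "\<dots> = 4 * (n + 1) * (\<Sum>t\<in>labelled_trees n. path_length t) + 2 * (n + 1) * card (labelled_trees n)"
    by (simp only: sum.distrib sum_distrib_left[symmetric] sum_constant of_nat_id) (simp add: mult.commute)
  finally show ?thesis .
qed

text \<open>Solving the two recurrences.  The ratio (2k)!/k! grows by the factor 4k+2 from k to
  k+1, exactly as the number of ordered trees does.\<close>

lemma fact_ratio_Suc:
  "(fact (2 * Suc k) / fact (Suc k) :: real) = (4 * real k + 2) * (fact (2 * k) / fact k)"
proof -
  have "(fact (2 * Suc k) :: real) = 2 * (real k + 1) * ((2 * real k + 1) * fact (2 * k))"
    by (simp add: algebra_simps)
  moreover have "(fact (Suc k) :: real) = (real k + 1) * fact k"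
    by simp
  ultimately show ?thesis
    by (simp del: fact_Suc add: divide_simps) (simp add: algebra_simps)
qed

lemma card_labelled_trees: "real (card (labelled_trees (Suc k))) = fact (2 * k) / fact k"
proof (induction k)
  case 0
  then show ?case by (simp add: labelled_trees_1)
next
  case (Suc k)
  have "real (card (labelled_trees (Suc (Suc k)))) = (4 * real k + 2) * (fact (2 * k) / fact k)"
  proof -
    have "card (labelled_trees (Suc (Suc k))) = (4 * Suc k - 2) * card (labelled_trees (Suc k))"
      by (rule card_labelled_trees_Suc) simp
    then have "real (card (labelled_trees (Suc (Suc k)))) = (4 * real k + 2) * real (card (labelled_trees (Suc k)))"
      by (simp add: algebra_simps)
    then show ?thesis
      unfolding Suc.IH .
  qed
  also have "\<dots> = fact (2 * Suc k) / fact (Suc k)"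
    by (simp only: fact_ratio_Suc)
  finally show ?case .
qed

lemma path_length_labelled_trees:
  "real (\<Sum>t\<in>labelled_trees (Suc k). path_length t) = real (Suc k) * (4 ^ k * fact k - fact (2 * k) / fact k)"
proof (induction k)
  case 0
  then show ?case by (simp add: labelled_trees_1)
next
  case (Suc k)
  have "real (\<Sum>t\<in>labelled_trees (Suc (Suc k)). path_length t)
     = 4 * (real k + 2) * (real (Suc k) * (4 ^ k * fact k - fact (2 * k) / fact k))
       + 2 * (real k + 2) * (fact (2 * k) / fact k)"
  proof -
    have "(\<Sum>t\<in>labelled_trees (Suc (Suc k)). path_length t)
        = 4 * (Suc k + 1) * (\<Sum>t\<in>labelled_trees (Suc k). path_length t)
          + 2 * (Suc k + 1) * card (labelled_trees (Suc k))"
      by (rule path_length_labelled_trees_Suc) simp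
    then have "real (\<Sum>t\<in>labelled_trees (Suc (Suc k)). path_length t)
        = 4 * (real k + 2) * real (\<Sum>t\<in>labelled_trees (Suc k). path_length t)
          + 2 * (real k + 2) * real (card (labelled_trees (Suc k)))"
      by (simp add: algebra_simps)
    then show ?thesis
      unfolding Suc.IH card_labelled_trees[of k] .
  qed
  also have "\<dots> = real (Suc (Suc k)) * (4 ^ Suc k * fact (Suc k) - fact (2 * Suc k) / fact (Suc k))"
    by (simp only: fact_ratio_Suc) (simp add: field_simps)
  finally show ?case .
qed

lemma sackin_total:
  assumes "n \<ge> 1"
  shows "real (\<Sum>C\<in>BT n. sackin_class n C)
    = real n * (2 ^ (n - 1) * fact (n - 1) - fact (2 * (n - 1)) / (fact (n - 1) * 2 ^ (n - 1)))"
proof -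
  obtain k where n: "n = Suc k"
    using assms by (cases n) auto
  have "2 ^ k * real (\<Sum>C\<in>BT n. sackin_class n C) = real (Suc k) * (4 ^ k * fact k - fact (2 * k) / fact k)"
    using arg_cong[OF path_length_sum_classes[of n], of real] path_length_labelled_trees[of k]
    by (simp add: n)
  moreover have "(4::real) ^ k = 2 ^ k * 2 ^ k"
    by (simp add: power_mult_distrib[symmetric])
  ultimately show ?thesis
    by (simp add: n field_simps)
qed

section \<open>The right-hand side in closed form\<close>

text \<open>With N = n - 2 and m = n - 1 - k, the summand of the theorem is
  (N + 1 - m)^2 * weight N m.\<close>

definition weight :: "nat \<Rightarrow> nat \<Rightarrow> real" where
  "weight N m = fact (N + m) / (fact m * 2 ^ m)"

lemma weight_Suc: "weight N (Suc m) = weight N m * (real N + real m + 1) / (2 * (real m + 1))"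
  unfolding weight_def by (simp add: field_simps)

lemma weight_Suc_left: "weight (Suc N) m = weight N m * (real N + real m + 1)"
  unfolding weight_def by (simp add: field_simps)

text \<open>Both sums below telescope: after subtracting a multiple of the previous sum, each
  summand is a difference of consecutive values of an explicit multiple of the weight.\<close>

lemma sum_weight: "(\<Sum>m<Suc N. weight N m) = fact N * 2 ^ N"
proof (induction N)
  case 0
  then show ?case by (simp add: weight_def)
next
  case (Suc N)
  define D where "D m = - 2 * real m * weight N m" for m
  have "weight (Suc N) m - 2 * (real N + 1) * weight N m = D (Suc m) - D m" for m
    unfolding D_def weight_Suc_left weight_Suc by (simp add: field_simps)
  then have "(\<Sum>m<Suc N. weight (Suc N) m - 2 * (real N + 1) * weight N m) = D (Suc N) - D 0"
    by (simp add: sum_lessThan_telescope)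
  then have "(\<Sum>m<Suc N. weight (Suc N) m) = 2 * (real N + 1) * (fact N * 2 ^ N) + D (Suc N)"
    using Suc.IH by (simp add: sum_subtractf sum_distrib_left[symmetric] D_def)
  moreover have "weight (Suc N) (Suc N) + D (Suc N) = 0"
    unfolding D_def weight_Suc_left by (simp add: algebra_simps)
  ultimately show ?case
    by (simp add: algebra_simps)
qed

lemma sum_square_weight:
  "(\<Sum>m<Suc N. (real N + 1 - real m)^2 * weight N m)
     = 2 * (real N + 1) * (fact N * 2 ^ N - weight N (Suc N))"
proof -
  define H where "H m = 2 * real m * (real N - real m) * weight N m" for m
  have step: "((real N + 1 - real m)^2 - 2 * (real N + 1)) * weight N m = H (Suc m) - H m" for m
    unfolding H_def weight_Suc by (simp add: field_simps power2_eq_square)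
  have "(\<Sum>m<Suc N. ((real N + 1 - real m)^2 - 2 * (real N + 1)) * weight N m) = H (Suc N) - H 0"
    unfolding step by (rule sum_lessThan_telescope)
  then have "(\<Sum>m<Suc N. ((real N + 1 - real m)^2 - 2 * (real N + 1)) * weight N m)
      = - 2 * (real N + 1) * weight N (Suc N)"
    by (simp add: H_def)
  moreover have "(\<Sum>m<Suc N. (real N + 1 - real m)^2 * weight N m)
      = (\<Sum>m<Suc N. ((real N + 1 - real m)^2 - 2 * (real N + 1)) * weight N m)
        + 2 * (real N + 1) * (\<Sum>m<Suc N. weight N m)"
    unfolding sum_distrib_left sum.distrib[symmetric] by (rule sum.cong) (auto simp: algebra_simps)
  ultimately show ?thesis
    unfolding sum_weight by (simp add: algebra_simps)
qed

lemma rhs_closed: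
  assumes "n \<ge> 2"
  shows "(\<Sum>k = 1..n - 1. fact (2 * n - k - 3) * real (k ^ 2) / (fact (n - k - 1) * 2 ^ (n - k - 1)))
    = 2 ^ (n - 1) * fact (n - 1) - fact (2 * (n - 1)) / (fact (n - 1) * 2 ^ (n - 1))"
proof -
  obtain N where n: "n = N + 2"
    using assms by (metis add.commute le_add_diff_inverse)
  have reindex: "(\<Sum>m<Suc N. (real N + 1 - real m)^2 * weight N m)
     = (\<Sum>k = 1..n - 1. fact (2 * n - k - 3) * real (k ^ 2) / (fact (n - k - 1) * 2 ^ (n - k - 1)))"
  proof (rule sum.reindex_bij_witness[where i="\<lambda>k. Suc N - k" and j="\<lambda>m. Suc N - m"])
    fix m assume "m \<in> {..<Suc N}"
    then have "2 * n - (Suc N - m) - 3 = N + m" "n - (Suc N - m) - 1 = m"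
      "real (Suc N - m) = real N + 1 - real m"
      using n by auto
    then show "fact (2 * n - (Suc N - m) - 3) * real ((Suc N - m) ^ 2)
        / (fact (n - (Suc N - m) - 1) * 2 ^ (n - (Suc N - m) - 1)) = (real N + 1 - real m)^2 * weight N m"
      by (simp add: weight_def)
  qed (auto simp: n)
  have "2 * (n - 1) = Suc (N + Suc N)" "n - 1 = Suc N"
    using n by simp_all
  then have "2 * (real N + 1) * weight N (Suc N) = fact (2 * (n - 1)) / (fact (n - 1) * 2 ^ (n - 1))"
    unfolding weight_def by (simp only: fact_Suc) (simp add: algebra_simps)
  then have "(\<Sum>m<Suc N. (real N + 1 - real m)^2 * weight N m)
      = 2 ^ (n - 1) * fact (n - 1) - fact (2 * (n - 1)) / (fact (n - 1) * 2 ^ (n - 1))"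
    unfolding sum_square_weight by (simp add: n algebra_simps)
  then show ?thesis
    unfolding reindex .
qed

theorem mainTheorem17:
  fixes n :: nat
  assumes "n \<ge> 3"
  shows "real (\<Sum>C \<in> BT n. sackin_class n C) =
    real n * (\<Sum>k = 1..n - 1. fact (2 * n - k - 3) * real (k ^ 2)
                               / (fact (n - k - 1) * 2 ^ (n - k - 1)))"
  using sackin_total[of n] rhs_closed[of n] assms by simp

end
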